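(* Let $r,s$ be positive integers, let $k=2^{8}r^{2}$ and let $c\ge 8rs\binom{k}{r}$. Let $M$ be an $n\times n$ zero-one matrix such that $k\mid n$ and $w(M)\ge cn^{3/2}$. Then either (i) $M$ contains an $\frac nk\times\frac nk$ matrix $N$ with $w(N)\ge 2c\left(\frac nk\right)^{3/2}$, or (ii) for some positive integer $m$, $M$ contains an $\frac{nr}{k}\times m$ matrix $N$ that is $r$-balanced and satisfies $w(N)\ge rs\sqrt{m}\left(\frac{nr}{k}\right)$.
   Context: $w(M)$ is the number of $1$-entries of $M$; $M$ contains $N$ if one can delete some rows and columns of $M$ and turn some $1$-entries into $0$-entries so that the result is $N$. An $a\times m$ zero-one matrix $N$ is $r$-balanced if $r\mid a$ and for every column $c\in[m]$ the number of $1$-entries among $N((i-1)\frac ar+1,c),\dots,N(i\frac ar,c)$ is the same for all $i\in[r]$. *)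

theory Defs
  imports Complex_Main
begin

text \<open>A zero-one matrix with a rows and b columns is represented by a function
  M :: nat => nat => bool, where M i j (for i < a, j < b) means entry (i,j) is 1.
  Entries outside the index range are ignored.\<close>

type_synonym zmat = "nat \<Rightarrow> nat \<Rightarrow> bool"

definition weight :: "nat \<Rightarrow> nat \<Rightarrow> zmat \<Rightarrow> nat" where
  "weight a b M = card {(i, j). i < a \<and> j < b \<and> M i j}"

definition contains :: "nat \<Rightarrow> nat \<Rightarrow> zmat \<Rightarrow> nat \<Rightarrow> nat \<Rightarrow> zmat \<Rightarrow> bool" where
  "contains a b M a' b' N \<longleftrightarrow>
     (\<exists>f g. strict_mono_on {..<a'} f \<and> f ` {..<a'} \<subseteq> {..<a} \<and>
            strict_mono_on {..<b'} g \<and> g ` {..<b'} \<subseteq> {..<b} \<and>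
            (\<forall>i<a'. \<forall>j<b'. N i j \<longrightarrow> M (f i) (g j)))"

definition col_count :: "zmat \<Rightarrow> nat \<Rightarrow> nat \<Rightarrow> nat \<Rightarrow> nat" where
  "col_count N c lo hi = card {i. lo \<le> i \<and> i < hi \<and> N i c}"

definition r_balanced :: "nat \<Rightarrow> nat \<Rightarrow> nat \<Rightarrow> zmat \<Rightarrow> bool" where
  "r_balanced r a m N \<longleftrightarrow> r dvd a \<and>
     (\<forall>c<m. \<forall>i\<in>{1..r}. \<forall>i'\<in>{1..r}.
        col_count N c ((i - 1) * (a div r)) (i * (a div r)) =
        col_count N c ((i' - 1) * (a div r)) (i' * (a div r)))"

end

theory Submission
  imports Defs "HOL-Library.FuncSet"
begin

text \<open>Cut the rows into \<open>k\<close> blocks of \<open>b = n/k\<close> rows and let \<open>a(i,j)\<close> be the number of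
  1-entries of column \<open>j\<close> in block \<open>i\<close>. Write each column sum as \<open>\<Sum>\<^sub>t #{i. a(i,j) \<ge> t}\<close>
  and charge a layer \<open>t\<close> to \<open>k\<close> if at least \<open>r\<close> blocks reach it, to \<open>r - 1\<close> if \<open>t \<le> T\<close>, and
  otherwise to the blocks with \<open>a(i,j) > T\<close>, where \<open>T \<approx> 2c\<surd>b\<close>.
  If (i) fails, any \<open>b\<close> columns of a block carry fewer than \<open>2cb\<^sup>3\<^sup>/\<^sup>2\<close> ones, so fewer than \<open>b\<close>
  columns of a block exceed \<open>T\<close> and together they are light.
  If (ii) fails, for each \<open>t\<close> at most \<open>K/t\<^sup>2\<close> columns, \<open>K = (k choose r)(rsb)\<^sup>2\<close>, have \<open>r\<close>
  blocks reaching \<open>t\<close>: by pigeonhole many of them would share the same \<open>r\<close> blocks, and keeping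
  exactly \<open>t\<close> ones per block in those columns gives a heavy \<open>r\<close>-balanced matrix.
  Summing \<open>min(n, K/t\<^sup>2)\<close> over \<open>t\<close> bounds the total weight by \<open>O(k\<surd>(nK) + nrT)\<close>, which is
  below \<open>cn\<^sup>3\<^sup>/\<^sup>2\<close> once \<open>c \<ge> 8rs(k choose r)\<close>.\<close>

definition block_count :: "nat \<Rightarrow> zmat \<Rightarrow> nat \<Rightarrow> nat \<Rightarrow> nat" where
  "block_count b M i j = card {u. u < b \<and> M (i * b + u) j}"

definition thick_columns :: "nat \<Rightarrow> nat \<Rightarrow> nat \<Rightarrow> zmat \<Rightarrow> nat \<Rightarrow> nat set" where
  "thick_columns k b r M t = {j. j < k * b \<and> r \<le> card {i. i < k \<and> t \<le> block_count b M i j}}"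

lemma strict_mono_enumeration:
  assumes "finite (S :: nat set)"
  obtains g where "strict_mono_on {..<card S} g" "g ` {..<card S} = S"
proof
  define xs where "xs = sorted_list_of_set S"
  have sorted: "sorted_wrt (<) xs" by (simp add: xs_def strict_sorted_list_of_set)
  have len: "length xs = card S" and set: "set xs = S" using assms by (simp_all add: xs_def)
  show "strict_mono_on {..<card S} (\<lambda>i. xs ! i)"
    unfolding strict_mono_on_def using sorted len by (auto intro: sorted_wrt_nth_less)
  show "(\<lambda>i. xs ! i) ` {..<card S} = S"
    using len set by (auto simp: set_conv_nth)
qed

lemma card_shifted_interval:
  "card {p. a \<le> p \<and> p < a + b \<and> P p} = card {u. u < (b::nat) \<and> P (a + u)}"
proof -
  have "{p. a \<le> p \<and> p < a + b \<and> P p} = (+) a ` {u. u < b \<and> P (a + u)}"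
  proof (intro set_eqI iffI)
    fix p assume "p \<in> {p. a \<le> p \<and> p < a + b \<and> P p}"
    then show "p \<in> (+) a ` {u. u < b \<and> P (a + u)}"
      by (auto simp: image_iff intro!: exI[of _ "p - a"])
  qed auto
  then show ?thesis by (simp add: card_image)
qed

lemma card_less_mult_eq_sum_blocks:
  "card {x. x < k * b \<and> P x} = (\<Sum>i<k. card {u. u < (b::nat) \<and> P (i * b + u)})"
proof (induction k)
  case 0 then show ?case by simp
next
  case (Suc k)
  have "{x. x < Suc k * b \<and> P x} = {x. x < k * b \<and> P x} \<union> {x. k * b \<le> x \<and> x < k * b + b \<and> P x}"
    by auto
  then have "card {x. x < Suc k * b \<and> P x}
      = card {x. x < k * b \<and> P x} + card {x. k * b \<le> x \<and> x < k * b + b \<and> P x}"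
    by (simp add: card_Un_disjoint disjoint_iff)
  then show ?case using Suc by (simp add: card_shifted_interval)
qed

lemma card_filter_first_elements:
  "card {u. u < (b::nat) \<and> P u \<and> card {v. v < u \<and> P v} < t} = min t (card {u. u < b \<and> P u})"
proof (induction b)
  case 0 then show ?case by simp
next
  case (Suc b)
  have split: "card {u. u < Suc b \<and> Q u} = card {u. u < b \<and> Q u} + (if Q b then 1 else 0)" for Q
  proof -
    have "{u. u < Suc b \<and> Q u} = (if Q b then insert b {u. u < b \<and> Q u} else {u. u < b \<and> Q u})"
      by (auto simp: less_Suc_eq)
    then show ?thesis by simp
  qed
  show ?case using Suc split[of "\<lambda>u. P u \<and> card {v. v < u \<and> P v} < t"] split[of P] by auto
qed

lemma sum_card_filter_swap:
  assumes "finite A" "finite B"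
  shows "(\<Sum>x\<in>A. card {y\<in>B. P x y}) = (\<Sum>y\<in>B. card {x\<in>A. P x y})"
proof -
  have "card {y\<in>B. P x y} = (\<Sum>y\<in>B. if P x y then 1 else 0)" for x
    unfolding card_eq_sum by (rule sum.inter_filter[OF assms(2)])
  moreover have "card {x\<in>A. P x y} = (\<Sum>x\<in>A. if P x y then 1 else 0)" for y
    unfolding card_eq_sum by (rule sum.inter_filter[OF assms(1)])
  ultimately show ?thesis by (simp add: sum.swap[of _ A B])
qed

lemma sum_eq_sum_layers:
  fixes a :: "nat \<Rightarrow> nat"
  assumes "\<And>i. i < k \<Longrightarrow> a i \<le> b"
  shows "(\<Sum>i<k. a i) = (\<Sum>t\<in>{1..b}. card {i. i < k \<and> t \<le> a i})"
proof -
  have "(\<Sum>i<k. a i) = (\<Sum>i<k. card {t\<in>{1..b}. t \<le> a i})"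
  proof (rule sum.cong)
    fix i assume "i \<in> {..<k}"
    then have "{t\<in>{1..b}. t \<le> a i} = {1..a i}" using assms[of i] by auto
    then show "a i = card {t\<in>{1..b}. t \<le> a i}" by simp
  qed simp
  also have "\<dots> = (\<Sum>t\<in>{1..b}. card {i\<in>{..<k}. t \<le> a i})" by (rule sum_card_filter_swap) auto
  finally show ?thesis by simp
qed

lemma weight_eq_sum_columns: "weight a b N = (\<Sum>j<b. card {i. i < a \<and> N i j})"
proof -
  have "{(i, j). i < a \<and> j < b \<and> N i j} = (\<lambda>(j, i). (i, j)) ` (SIGMA j:{..<b}. {i. i < a \<and> N i j})"
    by auto
  then have "card {(i, j). i < a \<and> j < b \<and> N i j} = card (SIGMA j:{..<b}. {i. i < a \<and> N i j})"
    by (simp add: card_image inj_on_def)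
  then show ?thesis unfolding weight_def by simp
qed

lemma weight_eq_sum_block_counts: "weight (k * b) m M = (\<Sum>j<m. \<Sum>i<k. block_count b M i j)"
  by (simp add: weight_eq_sum_columns card_less_mult_eq_sum_blocks block_count_def)

lemma block_count_le: "block_count b M i j \<le> b"
  using card_mono[of "{..<b}" "{u. u < b \<and> M (i * b + u) j}"] by (auto simp: block_count_def)

lemma col_count_eq_block_count: "col_count N j (i * b) (i * b + b) = block_count b N i j"
  by (simp add: col_count_def block_count_def card_shifted_interval)

lemma strict_mono_on_block_rows:
  fixes b :: nat and e :: "nat \<Rightarrow> nat"
  assumes "b > 0" and e: "strict_mono_on {..<r} e"
  shows "strict_mono_on {..<r * b} (\<lambda>p. e (p div b) * b + p mod b)"
proof (rule strict_mono_onI)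
  fix p p' assume "p' \<in> {..<r * b}" and "p < p'"
  then have "p' div b < r" and le: "p div b \<le> p' div b"
    using \<open>b > 0\<close> by (simp_all add: less_mult_imp_div_less div_le_mono)
  show "e (p div b) * b + p mod b < e (p' div b) * b + p' mod b"
  proof (cases "p div b = p' div b")
    case True
    then have "p mod b < p' mod b" using \<open>p < p'\<close>
      by (metis div_mult_mod_eq add_less_cancel_left)
    then show ?thesis using True by simp
  next
    case False
    then have "e (p div b) < e (p' div b)"
      using e le \<open>p' div b < r\<close> by (auto simp: strict_mono_on_def)
    then have "(e (p div b) + 1) * b \<le> e (p' div b) * b" by (intro mult_right_mono) simp_all
    moreover have "p mod b < b" using \<open>b > 0\<close> by simp
    ultimately show ?thesis by (simp add: algebra_simps)
  qed
qed

lemma block_row_less: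
  fixes b :: nat and e :: "nat \<Rightarrow> nat"
  assumes "b > 0" "p < r * b" "\<And>q. q < r \<Longrightarrow> e q < k"
  shows "e (p div b) * b + p mod b < k * b"
proof -
  have "e (p div b) + 1 \<le> k" using assms by (simp add: less_mult_imp_div_less Suc_le_eq)
  then have "(e (p div b) + 1) * b \<le> k * b" by (rule mult_right_mono) simp
  moreover have "p mod b < b" using \<open>b > 0\<close> by simp
  ultimately show ?thesis by (simp add: algebra_simps)
qed

lemma contains_block_submatrix:
  assumes "i < k" "S \<subseteq> {..<k * b}" "card S = b"
  obtains N where "contains (k * b) (k * b) M b b N" "weight b b N = (\<Sum>j\<in>S. block_count b M i j)"
proof -
  have "finite S" using assms(2) finite_subset by blast
  with assms(3) obtain g where g: "strict_mono_on {..<b} g" "g ` {..<b} = S"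
    by (metis strict_mono_enumeration)
  define N where "N p j = M (i * b + p) (g j)" for p j
  have "(i + 1) * b \<le> k * b" using assms(1) by (intro mult_right_mono) auto
  then have "(\<lambda>p. i * b + p) ` {..<b} \<subseteq> {..<k * b}" by auto
  then have "contains (k * b) (k * b) M b b N"
    unfolding contains_def N_def using g assms(2)
    by (intro exI[of _ "\<lambda>p. i * b + p"] exI[of _ g]) (auto simp: strict_mono_on_def)
  moreover have "weight b b N = (\<Sum>j\<in>S. block_count b M i j)"
    unfolding weight_eq_sum_columns N_def block_count_def g(2)[symmetric]
    by (simp add: sum.reindex strict_mono_on_imp_inj_on[OF g(1)])
  ultimately show thesis by (rule that)
qed

lemma contains_balanced_submatrix:
  assumes "b > 0" "r > 0"
    and R: "R \<subseteq> {..<k}" "card R = r" and S: "S \<subseteq> {..<k * b}"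
    and thick: "\<forall>i\<in>R. \<forall>j\<in>S. t \<le> block_count b M i j"
  obtains N where "contains (k * b) (k * b) M (r * b) (card S) N" "r_balanced r (r * b) (card S) N"
    "weight (r * b) (card S) N = card S * (r * t)"
proof -
  have "finite R" "finite S" using R S finite_subset by blast+
  then obtain e g where e: "strict_mono_on {..<r} e" "e ` {..<r} = R"
      and g: "strict_mono_on {..<card S} g" "g ` {..<card S} = S"
    by (metis strict_mono_enumeration R(2))
  define f where "f p = e (p div b) * b + p mod b" for p
  \<comment> \<open>keep only the first \<open>t\<close> ones of each selected column in each selected block\<close>
  define N where
    "N p j = (M (f p) (g j) \<and> card {v. v < p mod b \<and> M (e (p div b) * b + v) (g j)} < t)" for p j
  have count: "block_count b N q j = t" if "q < r" "j < card S" for q j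
  proof -
    have "{u. u < b \<and> N (q * b + u) j} =
        {u. u < b \<and> M (e q * b + u) (g j) \<and> card {v. v < u \<and> M (e q * b + v) (g j)} < t}"
      using \<open>b > 0\<close> by (auto simp: N_def f_def)
    moreover have "t \<le> block_count b M (e q) (g j)" using that e g thick by auto
    ultimately show ?thesis by (simp add: block_count_def card_filter_first_elements)
  qed
  have "contains (k * b) (k * b) M (r * b) (card S) N"
    unfolding contains_def
  proof (rule exI[of _ f], rule exI[of _ g], intro conjI)
    show "strict_mono_on {..<r * b} f"
      unfolding f_def by (rule strict_mono_on_block_rows[OF \<open>b > 0\<close> e(1)])
    show "f ` {..<r * b} \<subseteq> {..<k * b}"
      using e R(1) by (auto simp: f_def intro!: block_row_less[OF \<open>b > 0\<close>])
  qed (use g S N_def in auto)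
  moreover have "r_balanced r (r * b) (card S) N"
  proof -
    have "col_count N j ((i - 1) * b) (i * b) = t" if "j < card S" "i \<in> {1..r}" for i j
    proof -
      have "i * b = (i - 1) * b + b" "i - 1 < r" using that(2) by (cases i; auto)+
      then show ?thesis using that(1) count[of "i - 1" j] col_count_eq_block_count[of N j "i - 1" b]
        by simp
    qed
    then show ?thesis using \<open>r > 0\<close> by (simp add: r_balanced_def)
  qed
  moreover have "weight (r * b) (card S) N = card S * (r * t)"
    by (simp add: weight_eq_sum_block_counts count)
  ultimately show thesis by (rule that)
qed

text \<open>At most \<open>b - 1\<close> values exceed \<open>T\<close>, since \<open>b\<close> of them would sum to at least \<open>bT \<ge> B\<close>;
  padding them to exactly \<open>b\<close> indices shows that their sum is below \<open>B\<close>.\<close>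
lemma sum_above_threshold_lt:
  fixes v :: "nat \<Rightarrow> nat" and B :: real
  assumes "b \<le> n"
    and small: "\<And>S. S \<subseteq> {..<n} \<Longrightarrow> card S = b \<Longrightarrow> real (\<Sum>j\<in>S. v j) < B"
    and "B \<le> real b * real T"
  shows "real (\<Sum>j | j < n \<and> T < v j. v j) < B"
proof -
  define H where "H = {j. j < n \<and> T < v j}"
  have H: "H \<subseteq> {..<n}" "finite H" by (auto simp: H_def)
  have few: "card H < b"
  proof (rule ccontr)
    assume "\<not> card H < b"
    then obtain S where S: "S \<subseteq> H" "card S = b"
      by (meson not_less obtain_subset_with_card_n)
    have "(\<Sum>j\<in>S. T) \<le> (\<Sum>j\<in>S. v j)" using S by (intro sum_mono) (auto simp: H_def)
    then have "b * T \<le> (\<Sum>j\<in>S. v j)" using S by simp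
    then have "real b * real T \<le> real (\<Sum>j\<in>S. v j)" by (metis of_nat_le_iff of_nat_mult)
    moreover have "real (\<Sum>j\<in>S. v j) < B" using S H by (intro small) auto
    ultimately show False using \<open>B \<le> real b * real T\<close> by linarith
  qed
  have "b - card H \<le> card ({..<n} - H)"
    using \<open>b \<le> n\<close> H by (simp add: card_Diff_subset)
  then obtain P where P: "P \<subseteq> {..<n} - H" "card P = b - card H"
    by (meson obtain_subset_with_card_n)
  have HP: "card (H \<union> P) = b"
    using few P H(2) finite_subset[OF P(1)] by (subst card_Un_disjoint) auto
  have "(\<Sum>j\<in>H. v j) \<le> (\<Sum>j\<in>H \<union> P. v j)"
    using P H by (intro sum_mono2) (auto intro: finite_subset)
  moreover have "real (\<Sum>j\<in>H \<union> P. v j) < B" using HP P H by (intro small) auto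
  ultimately show ?thesis unfolding H_def by linarith
qed

text \<open>Layer \<open>t\<close> of \<open>\<Sum>\<^sub>i a i = \<Sum>\<^sub>t #{i. t \<le> a i}\<close> is charged \<open>k\<close> if it has at least \<open>r\<close>
  members, \<open>r - 1\<close> if \<open>t \<le> T\<close>, and otherwise to the \<open>a i\<close> exceeding \<open>T\<close>.\<close>
lemma sum_le_layer_bound:
  fixes a :: "nat \<Rightarrow> nat"
  assumes "\<And>i. i < k \<Longrightarrow> a i \<le> b"
  shows "(\<Sum>i<k. a i) \<le> k * card {t\<in>{1..b}. r \<le> card {i. i < k \<and> t \<le> a i}} + (r - 1) * T
           + (\<Sum>i<k. if T < a i then a i else 0)"
proof -
  define D where "D t = card {i. i < k \<and> t \<le> a i}" for t
  have layer: "D t \<le> (if r \<le> D t then k else 0) + (if t \<le> T then r - 1 else 0)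
      + card {i\<in>{..<k}. T < t \<and> t \<le> a i}" for t
  proof -
    have "D t \<le> k" using card_mono[of "{..<k}" "{i. i < k \<and> t \<le> a i}"] by (auto simp: D_def)
    moreover have "D t = card {i\<in>{..<k}. T < t \<and> t \<le> a i}" if "T < t" using that by (simp add: D_def)
    ultimately show ?thesis by (cases "r \<le> D t"; cases "t \<le> T") auto
  qed
  have big: "(\<Sum>t\<in>{1..b}. if r \<le> D t then k else 0) = k * card {t\<in>{1..b}. r \<le> D t}"
    by (simp add: sum.If_cases Int_def)
  have low: "(\<Sum>t\<in>{1..b}. if t \<le> T then r - 1 else 0) \<le> (r - 1) * T"
  proof -
    have "card {t\<in>{1..b}. t \<le> T} \<le> card {1..T}" by (rule card_mono) auto
    then show ?thesis by (simp add: sum.If_cases Int_def)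
  qed
  have high: "(\<Sum>t\<in>{1..b}. card {i\<in>{..<k}. T < t \<and> t \<le> a i}) \<le> (\<Sum>i<k. if T < a i then a i else 0)"
  proof -
    have "card {t\<in>{1..b}. T < t \<and> t \<le> a i} \<le> (if T < a i then a i else 0)" for i
    proof (cases "T < a i")
      case True
      have "card {t\<in>{1..b}. T < t \<and> t \<le> a i} \<le> card {1..a i}" by (rule card_mono) auto
      then show ?thesis using True by simp
    qed simp
    then have "(\<Sum>i<k. card {t\<in>{1..b}. T < t \<and> t \<le> a i}) \<le> (\<Sum>i<k. if T < a i then a i else 0)"
      by (intro sum_mono)
    then show ?thesis by (simp only: sum_card_filter_swap[OF finite_atLeastAtMost finite_lessThan])
  qed
  have "(\<Sum>i<k. a i) = (\<Sum>t\<in>{1..b}. D t)" unfolding D_def by (rule sum_eq_sum_layers[OF assms])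
  also have "\<dots> \<le> (\<Sum>t\<in>{1..b}. (if r \<le> D t then k else 0) + (if t \<le> T then r - 1 else 0)
      + card {i\<in>{..<k}. T < t \<and> t \<le> a i})"
    by (intro sum_mono layer)
  also have "\<dots> \<le> k * card {t\<in>{1..b}. r \<le> D t} + (r - 1) * T + (\<Sum>i<k. if T < a i then a i else 0)"
    unfolding sum.distrib big using low high by linarith
  finally show ?thesis unfolding D_def .
qed

lemma pigeonhole_common_subset:
  assumes "finite A" "r \<le> k" and thick: "\<And>j. j \<in> A \<Longrightarrow> r \<le> card {i. i < k \<and> Q i j}"
  obtains R S where "R \<subseteq> {..<k}" "card R = r" "S \<subseteq> A" "card A \<le> card S * (k choose r)"
    "\<forall>i\<in>R. \<forall>j\<in>S. Q i j"
proof -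
  define P where "P = {R. R \<subseteq> {..<k} \<and> card R = r}"
  define f where "f j = (SOME R. R \<subseteq> {i. i < k \<and> Q i j} \<and> card R = r)" for j
  have f: "f j \<subseteq> {i. i < k \<and> Q i j} \<and> card (f j) = r" if "j \<in> A" for j
    unfolding f_def by (rule someI_ex) (use obtain_subset_with_card_n[OF thick[OF that]] in blast)
  have "f \<in> A \<rightarrow> P" using f by (auto simp: P_def)
  moreover have "finite P" unfolding P_def by (rule finite_subset[of _ "Pow {..<k}"]) auto
  moreover have "P \<noteq> {}"
    using obtain_subset_with_card_n[of r "{..<k}"] \<open>r \<le> k\<close> by (auto simp: P_def)
  ultimately obtain R where R: "R \<in> P" "card A \<le> card (f -` {R} \<inter> A) * card P"
    using pigeonhole_card[OF _ \<open>finite A\<close>] by blast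
  have "card P = k choose r" unfolding P_def using n_subsets[of "{..<k}" r] by simp
  then show thesis using R f by (intro that[of R "f -` {R} \<inter> A"]) (auto simp: P_def)
qed

lemma sum_inverse_squares_le:
  assumes "t0 > 0"
  shows "(\<Sum>t\<in>{t0<..b}. 1 / (real t)^2) \<le> 1 / real t0"
proof (cases "t0 \<le> b")
  case True
  then have "(\<Sum>t\<in>{t0<..b}. 1 / (real t)^2) \<le> 1 / real t0 - 1 / real b"
  proof (induction b rule: dec_induct)
    case (step b)
    have b: "real b \<ge> 1" using step assms by simp
    have "1 / (real b + 1)^2 \<le> 1 / (real b * (real b + 1))"
      using b by (intro divide_left_mono mult_pos_pos) (auto simp: power2_eq_square)
    also have "\<dots> = 1 / real b - 1 / (real b + 1)" using b by (simp add: field_simps)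
    finally have "1 / (real b + 1)^2 \<le> 1 / real b - 1 / (real b + 1)" .
    moreover have "{t0<..Suc b} = insert (Suc b) {t0<..b}" using step by auto
    ultimately show ?case using step.IH by (simp add: add.commute)
  qed simp
  then show ?thesis by (smt (verit) of_nat_0_le_iff divide_nonneg_nonneg)
qed simp

text \<open>Split the range at \<open>t\<^sub>0 = \<lceil>\<surd>(K/n)\<rceil>\<close>, where the two bounds on \<open>G t\<close> cross.\<close>
lemma sum_min_inverse_square_le:
  fixes G :: "nat \<Rightarrow> real" and n K :: real
  assumes "n > 0" "K > 0"
    and G_n: "\<And>t. t \<in> {1..b} \<Longrightarrow> G t \<le> n"
    and G_K: "\<And>t. t \<in> {1..b} \<Longrightarrow> G t \<le> K / (real t)^2"
  shows "(\<Sum>t\<in>{1..b}. G t) \<le> 2 * sqrt (n * K) + n"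
proof -
  define y where "y = sqrt (K / n)"
  define t0 where "t0 = nat \<lceil>y\<rceil>"
  have y: "y > 0" "y^2 = K / n" using assms(1,2) by (simp_all add: y_def)
  have t0: "y \<le> real t0" "real t0 \<le> y + 1" "t0 > 0"
    using y(1) of_int_ceiling_le_add_one[of y] by (auto simp: t0_def)
  have ny: "n * y = sqrt (n * K)" and Ky: "K / y = sqrt (n * K)"
    using y assms(1,2) by (auto intro!: real_sqrt_unique[symmetric]
        simp: power_mult_distrib power_divide field_simps power2_eq_square)
  have "(\<Sum>t\<in>{1..b}. G t)
      \<le> (\<Sum>t\<in>{1..b}. (if t \<le> t0 then n else 0) + (if t0 < t then K / (real t)^2 else 0))"
    using G_n G_K by (intro sum_mono) auto
  also have "\<dots> = real (card {t\<in>{1..b}. t \<le> t0}) * n + K * (\<Sum>t\<in>{t0<..b}. 1 / (real t)^2)"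
  proof -
    have "{t\<in>{1..b}. t0 < t} = {t0<..b}" using t0(3) by auto
    then show ?thesis
      by (simp add: sum.distrib sum.inter_filter[symmetric] sum_distrib_left)
  qed
  also have "\<dots> \<le> real t0 * n + K / real t0"
  proof -
    have "card {t\<in>{1..b}. t \<le> t0} \<le> card {1..t0}" by (rule card_mono) auto
    then have "real (card {t\<in>{1..b}. t \<le> t0}) * n \<le> real t0 * n" using assms(1) by simp
    moreover have "K * (\<Sum>t\<in>{t0<..b}. 1 / (real t)^2) \<le> K * (1 / real t0)"
      using sum_inverse_squares_le[OF t0(3)] assms(2) by (intro mult_left_mono) auto
    ultimately show ?thesis by simp
  qed
  also have "\<dots> \<le> (y + 1) * n + K / y"
    using t0 y assms(1,2) by (intro add_mono mult_right_mono divide_left_mono) auto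
  also have "\<dots> = 2 * sqrt (n * K) + n" using ny Ky by (simp add: algebra_simps)
  finally show ?thesis .
qed

lemma powr_three_halves:
  assumes "(z::real) \<ge> 0"
  shows "z powr (3/2) = z * sqrt z"
proof -
  have "z powr (3/2) = z powr (1 + 1/2)" by simp
  also have "\<dots> = z powr 1 * z powr (1/2)" by (rule powr_add)
  finally show ?thesis by (simp only: powr_one[OF assms] powr_half_sqrt[OF assms])
qed

lemma binomial_square_ge:
  assumes "r > 0"
  shows "256 * real r \<le> real ((2^8 * r^2) choose r)"
proof -
  have "r \<le> 2^8 * r^2" using assms by (simp add: power2_eq_square)
  have "256 * real r \<le> (256 * real r) ^ r" using assms power_increasing[of 1 r "256 * real r"] by simp
  also have "\<dots> = (real (2^8 * r^2) / real r) ^ r" using assms by (simp add: power2_eq_square)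
  also have "\<dots> \<le> real ((2^8 * r^2) choose r)" by (rule binomial_ge_n_over_k_pow_k[OF \<open>r \<le> 2^8 * r^2\<close>])
  finally show ?thesis .
qed

lemma large_c_inequality:
  fixes c r s q x T :: real
  assumes r: "r \<ge> 1" and s: "s \<ge> 1" and q: "q \<ge> 16" and x: "x \<ge> 1"
    and c: "c \<ge> 8 * r * s * q^2" and T: "T \<le> 2 * c * x + 1"
  shows "32 * r^2 * s * q * x + 256 * r^2 + (r - 1) * T + 2 * c * x < 16 * c * r * x"
proof -
  have "q^2 \<ge> 16 * q" using q by (simp add: power2_eq_square mult_right_mono)
  then have "r * s * q^2 \<ge> r * s * (16 * q)" using r s by (intro mult_left_mono) auto
  then have c_q: "c \<ge> 128 * (r * s * q)" using c by linarith
  have "r * s * q \<ge> r * 1 * 16" using r s q by (intro mult_mono) auto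
  then have "c \<ge> 2048 * r" using c_q by linarith
  then have "c * (r * x) \<ge> 2048 * r * (r * x)" using r x by (intro mult_right_mono) auto
  moreover have "r * (r * x) \<ge> r * r" using r x by simp
  ultimately have c_r: "c * r * x \<ge> 2048 * r^2" by (simp add: algebra_simps power2_eq_square)
  have "c * (r * x) \<ge> 128 * (r * s * q) * (r * x)" using c_q r x by (intro mult_right_mono) auto
  then have c_s: "c * r * x \<ge> 4 * (32 * r^2 * s * q * x)" by (simp add: algebra_simps power2_eq_square)
  have "(r - 1) * T \<le> (r - 1) * (2 * c * x + 1)" using T r by (intro mult_left_mono) auto
  also have "\<dots> = 2 * (c * r * x) - 2 * c * x + r - 1" by (simp add: algebra_simps)
  finally have "(r - 1) * T \<le> 2 * (c * r * x) - 2 * c * x + r - 1" .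
  moreover have "r \<le> r^2" using r by (simp add: power2_eq_square)
  ultimately show ?thesis using c_r c_s r by linarith
qed

lemma weight_le_layer_bound:
  "weight (k * b) (k * b) M \<le> k * (\<Sum>t\<in>{1..b}. card (thick_columns k b r M t)) + k * b * ((r - 1) * T)
     + (\<Sum>i<k. \<Sum>j | j < k * b \<and> T < block_count b M i j. block_count b M i j)"
proof -
  let ?a = "block_count b M"
  have "weight (k * b) (k * b) M \<le> (\<Sum>j<k * b. k * card {t\<in>{1..b}. r \<le> card {i. i < k \<and> t \<le> ?a i j}}
      + (r - 1) * T + (\<Sum>i<k. if T < ?a i j then ?a i j else 0))"
    unfolding weight_eq_sum_block_counts by (intro sum_mono sum_le_layer_bound block_count_le)
  also have "\<dots> = k * (\<Sum>t\<in>{1..b}. card (thick_columns k b r M t)) + k * b * ((r - 1) * T)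
      + (\<Sum>i<k. \<Sum>j | j < k * b \<and> T < ?a i j. ?a i j)"
  proof -
    have "(\<Sum>j<k * b. card {t\<in>{1..b}. r \<le> card {i. i < k \<and> t \<le> ?a i j}})
        = (\<Sum>t\<in>{1..b}. card {j\<in>{..<k * b}. r \<le> card {i. i < k \<and> t \<le> ?a i j}})"
      by (rule sum_card_filter_swap) simp_all
    also have "\<dots> = (\<Sum>t\<in>{1..b}. card (thick_columns k b r M t))"
      by (simp add: thick_columns_def)
    finally have thick_sum: "(\<Sum>j<k * b. card {t\<in>{1..b}. r \<le> card {i. i < k \<and> t \<le> ?a i j}})
        = (\<Sum>t\<in>{1..b}. card (thick_columns k b r M t))" .
    moreover have "(\<Sum>j<k * b. \<Sum>i<k. if T < ?a i j then ?a i j else 0)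
        = (\<Sum>i<k. \<Sum>j | j < k * b \<and> T < ?a i j. ?a i j)"
      by (subst sum.swap) (simp add: sum.inter_filter[symmetric] lessThan_def conj_commute)
    ultimately show ?thesis by (simp add: sum.distrib sum_distrib_left[symmetric])
  qed
  finally show ?thesis .
qed

lemma sum_heavy_block_counts_lt:
  fixes B :: real
  assumes "i < k" "B \<le> real b * real T"
    and no_dense: "\<And>N. contains (k * b) (k * b) M b b N \<Longrightarrow> real (weight b b N) < B"
  shows "real (\<Sum>j | j < k * b \<and> T < block_count b M i j. block_count b M i j) < B"
proof (rule sum_above_threshold_lt)
  show "b \<le> k * b" using \<open>i < k\<close> by simp
  show "real (\<Sum>j\<in>S. block_count b M i j) < B" if S: "S \<subseteq> {..<k * b}" "card S = b" for S
  proof -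
    obtain N where N: "contains (k * b) (k * b) M b b N" "weight b b N = (\<Sum>j\<in>S. block_count b M i j)"
      using contains_block_submatrix[OF \<open>i < k\<close> S] .
    show ?thesis using no_dense[OF N(1)] unfolding N(2) .
  qed
qed fact

lemma card_thick_columns_le:
  assumes "r > 0" "b > 0" "r \<le> k"
    and no_balanced: "\<And>m N. m > 0 \<Longrightarrow> contains (k * b) (k * b) M (r * b) m N \<Longrightarrow>
      r_balanced r (r * b) m N \<Longrightarrow> real (weight (r * b) m N) < real r * real s * sqrt (real m) * real (r * b)"
  shows "real (card (thick_columns k b r M t)) * (real t)^2 \<le> real (k choose r) * (real s * real r * real b)^2"
proof -
  have "finite (thick_columns k b r M t)"
    and "\<And>j. j \<in> thick_columns k b r M t \<Longrightarrow> r \<le> card {i. i < k \<and> t \<le> block_count b M i j}"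
    by (simp_all add: thick_columns_def)
  from pigeonhole_common_subset[OF this(1) \<open>r \<le> k\<close> this(2)]
  obtain R S where R: "R \<subseteq> {..<k}" "card R = r" and S: "S \<subseteq> thick_columns k b r M t"
    and pigeon: "card (thick_columns k b r M t) \<le> card S * (k choose r)"
    and thick: "\<forall>i\<in>R. \<forall>j\<in>S. t \<le> block_count b M i j" .
  have S_bound: "real (card S) * (real t)^2 \<le> (real s * real r * real b)^2"
  proof (cases "card S = 0")
    case False
    have "S \<subseteq> {..<k * b}" using S by (auto simp: thick_columns_def)
    obtain N where "contains (k * b) (k * b) M (r * b) (card S) N" "r_balanced r (r * b) (card S) N"
      and weight: "weight (r * b) (card S) N = card S * (r * t)"
      using contains_balanced_submatrix[OF \<open>b > 0\<close> \<open>r > 0\<close> R \<open>S \<subseteq> {..<k * b}\<close> thick] .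
    then have "real (card S * (r * t)) < real r * real s * sqrt (real (card S)) * real (r * b)"
      using no_balanced[of "card S" N] False by simp
    then have "real r * sqrt (real (card S)) * (real t * sqrt (real (card S)))
        < real r * sqrt (real (card S)) * (real s * real r * real b)"
      by (simp add: algebra_simps)
    moreover have "0 < real r * sqrt (real (card S))" using \<open>r > 0\<close> False by simp
    ultimately have "real t * sqrt (real (card S)) < real s * real r * real b"
      by (simp only: mult_less_cancel_left_pos)
    then have "(real t * sqrt (real (card S)))^2 < (real s * real r * real b)^2"
      by (intro power_strict_mono) auto
    then show ?thesis by (simp add: power_mult_distrib mult.commute)
  qed simp
  have "real (card (thick_columns k b r M t)) * (real t)^2 \<le> real (card S) * real (k choose r) * (real t)^2"
    using pigeon by (intro mult_right_mono) (simp_all flip: of_nat_mult)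
  also have "\<dots> = real (k choose r) * (real (card S) * (real t)^2)" by simp
  also have "\<dots> \<le> real (k choose r) * (real s * real r * real b)^2"
    using S_bound by (intro mult_left_mono) simp_all
  finally show ?thesis .
qed

lemma weight_le_of_no_dense_no_balanced:
  fixes B :: real
  assumes "r > 0" "s > 0" "b > 0" "r \<le> k" "B \<le> real b * real T"
    and no_dense: "\<And>N. contains (k * b) (k * b) M b b N \<Longrightarrow> real (weight b b N) < B"
    and no_balanced: "\<And>m N. m > 0 \<Longrightarrow> contains (k * b) (k * b) M (r * b) m N \<Longrightarrow>
      r_balanced r (r * b) m N \<Longrightarrow> real (weight (r * b) m N) < real r * real s * sqrt (real m) * real (r * b)"
  defines "K \<equiv> real (k choose r) * (real s * real r * real b)^2"
  shows "real (weight (k * b) (k * b) M)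
    \<le> real k * (2 * sqrt (real (k * b) * K) + real (k * b)) + real (k * b) * (real r - 1) * real T + real k * B"
proof -
  let ?G = "\<lambda>t. real (card (thick_columns k b r M t))"
  let ?H = "\<lambda>i. \<Sum>j | j < k * b \<and> T < block_count b M i j. block_count b M i j"
  have "K > 0" using assms(1-4) by (simp add: K_def)
  have "?G t \<le> real (k * b)" for t
  proof -
    have "card (thick_columns k b r M t) \<le> card {..<k * b}"
      by (rule card_mono) (auto simp: thick_columns_def)
    then show ?thesis by (simp only: of_nat_le_iff card_lessThan)
  qed
  moreover have "?G t \<le> K / (real t)^2" if "t \<in> {1..b}" for t
    using card_thick_columns_le[OF assms(1,3,4) no_balanced] that by (simp add: K_def pos_le_divide_eq)
  ultimately have G: "(\<Sum>t\<in>{1..b}. ?G t) \<le> 2 * sqrt (real (k * b) * K) + real (k * b)"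
    using \<open>K > 0\<close> assms(1,3,4) by (intro sum_min_inverse_square_le) auto
  have H: "real (\<Sum>i<k. ?H i) \<le> real k * B"
  proof -
    have "(\<Sum>i<k. real (?H i)) \<le> (\<Sum>i<k. B)"
      using sum_heavy_block_counts_lt[OF _ assms(5) no_dense] by (intro sum_mono less_imp_le) auto
    then show ?thesis by simp
  qed
  have "real (weight (k * b) (k * b) M)
      \<le> real (k * (\<Sum>t\<in>{1..b}. card (thick_columns k b r M t)) + k * b * ((r - 1) * T) + (\<Sum>i<k. ?H i))"
    using weight_le_layer_bound[of k b M r T] by (simp only: of_nat_le_iff)
  also have "\<dots> = real k * (\<Sum>t\<in>{1..b}. ?G t) + real (k * b) * (real r - 1) * real T + real (\<Sum>i<k. ?H i)"
    using \<open>r > 0\<close> by (simp add: of_nat_diff)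
  also have "\<dots> \<le> real k * (2 * sqrt (real (k * b) * K) + real (k * b)) + real (k * b) * (real r - 1) * real T
      + real k * B"
    using G H by (intro add_mono order.refl mult_left_mono) auto
  finally show ?thesis .
qed

lemma weight_lt_of_no_dense_no_balanced:
  fixes c :: real
  assumes "r > 0" "s > 0" "k = 2^8 * r^2" "b > 0" and c: "c \<ge> 8 * real r * real s * real (k choose r)"
    and no_dense: "\<And>N. contains (k * b) (k * b) M b b N \<Longrightarrow> real (weight b b N) < 2 * c * real b powr (3/2)"
    and no_balanced: "\<And>m N. m > 0 \<Longrightarrow> contains (k * b) (k * b) M (r * b) m N \<Longrightarrow>
      r_balanced r (r * b) m N \<Longrightarrow> real (weight (r * b) m N) < real r * real s * sqrt (real m) * real (r * b)"
  shows "real (weight (k * b) (k * b) M) < c * real (k * b) powr (3/2)"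
proof -
  define x where "x = sqrt (real b)"
  define q where "q = sqrt (real (k choose r))"
  define T where "T = nat \<lceil>2 * c * x\<rceil>"
  have k: "real k = 256 * (real r)^2" using assms(3) by simp
  have "r \<le> k" using assms(1,3) by (simp add: power2_eq_square)
  have "(16::real)^2 \<le> real (k choose r)"
    using binomial_square_ge[OF assms(1)] assms(1,3) by simp
  then have "q \<ge> 16" unfolding q_def by (rule real_le_rsqrt)
  have x: "x \<ge> 1" "real b powr (3/2) = real b * x" using assms(4) by (simp_all add: x_def powr_three_halves)
  have "0 \<le> 8 * real r * real s * real (k choose r)" by simp
  then have "0 \<le> c" using c by linarith
  then have "0 \<le> 2 * c * x" using x(1) by simp
  then have T: "2 * c * x \<le> real T" "real T \<le> 2 * c * x + 1"
    using of_int_ceiling_le_add_one[of "2 * c * x"] by (auto simp: T_def)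
  have sqrt_kb: "sqrt (real (k * b)) = 16 * real r * x"
  proof -
    have "real (k * b) = (16 * real r)^2 * real b" by (simp add: k power2_eq_square)
    then have "sqrt (real (k * b)) = sqrt ((16 * real r)^2) * sqrt (real b)" by (simp only: real_sqrt_mult)
    also have "sqrt ((16 * real r)^2) = 16 * real r" by (rule real_sqrt_unique) auto
    finally show ?thesis unfolding x_def .
  qed
  have "real (weight (k * b) (k * b) M)
      \<le> real k * (2 * sqrt (real (k * b) * (real (k choose r) * (real s * real r * real b)^2)) + real (k * b))
        + real (k * b) * (real r - 1) * real T + real k * (2 * c * real b * x)"
  proof (rule weight_le_of_no_dense_no_balanced[OF assms(1,2,4) \<open>r \<le> k\<close> _ _ no_balanced])
    show "2 * c * real b * x \<le> real b * real T" using T(1) assms(4) by (simp add: mult.commute mult.left_commute)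
    show "real (weight b b N) < 2 * c * real b * x" if "contains (k * b) (k * b) M b b N" for N
      using no_dense[OF that] x(2) by (simp add: mult.assoc)
  qed
  also have "\<dots> = real (k * b) * (32 * (real r)^2 * real s * q * x + 256 * (real r)^2
      + (real r - 1) * real T + 2 * c * x)"
    by (simp add: real_sqrt_mult sqrt_kb q_def x_def k algebra_simps power2_eq_square)
  also have "\<dots> < real (k * b) * (16 * c * real r * x)"
  proof (rule mult_strict_left_mono)
    show "32 * (real r)^2 * real s * q * x + 256 * (real r)^2 + (real r - 1) * real T + 2 * c * x
        < 16 * c * real r * x"
      using assms(1,2) c \<open>q \<ge> 16\<close> x(1) T(2) by (intro large_c_inequality) (simp_all add: q_def)
    show "0 < real (k * b)" using assms(1,3,4) by simp
  qed
  also have "\<dots> = c * real (k * b) powr (3/2)"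
    unfolding powr_three_halves[OF of_nat_0_le_iff] sqrt_kb by (simp add: algebra_simps)
  finally show ?thesis .
qed

theorem lemma5p4:
  fixes r s n k :: nat and c :: real and M :: zmat
  assumes "r > 0" and "s > 0"
    and "k = 2^8 * r^2"
    and "c \<ge> 8 * real r * real s * real (k choose r)"
    and "k dvd n"
    and "real (weight n n M) \<ge> c * real n powr (3/2)"
  shows "(\<exists>N. contains n n M (n div k) (n div k) N \<and>
             real (weight (n div k) (n div k) N) \<ge> 2 * c * real (n div k) powr (3/2))
       \<or> (\<exists>m N. m > 0 \<and> contains n n M (n * r div k) m N \<and>
             r_balanced r (n * r div k) m N \<and>
             real (weight (n * r div k) m N) \<ge> real r * real s * sqrt (real m) * real (n * r div k))"
proof (cases "n = 0")
  case True
  then have "contains n n M (n div k) (n div k) (\<lambda>_ _. False)"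
    by (simp add: contains_def)
  then show ?thesis using True by (auto simp: weight_def)
next
  case False
  define b where "b = n div k"
  have "k > 0" using assms(1,3) by simp
  then have n: "n = k * b" "n * r div k = r * b" using assms(5) by (auto simp: b_def)
  then have "b > 0" using False by simp
  show ?thesis
  proof (rule ccontr)
    assume neither: "\<not> ?thesis"
    have "real (weight (k * b) (k * b) M) < c * real (k * b) powr (3/2)"
    proof (rule weight_lt_of_no_dense_no_balanced[OF assms(1-3) \<open>b > 0\<close> assms(4)])
      show "real (weight b b N) < 2 * c * real b powr (3/2)" if "contains (k * b) (k * b) M b b N" for N
        using neither that unfolding n(2) b_def[symmetric] n(1)[symmetric] by auto
      show "real (weight (r * b) m N) < real r * real s * sqrt (real m) * real (r * b)"
        if "m > 0" "contains (k * b) (k * b) M (r * b) m N" "r_balanced r (r * b) m N" for m N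
        using neither that unfolding n(2) n(1)[symmetric] by (meson not_le)
    qed
    then show False using assms(6) n(1) by simp
  qed
qed

end
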